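(* Fix $0<p<1$. For a random fan $\Sigma$ chosen with respect to $T(h,p)$, with high probability $X(\Sigma)$ is singular.
   Context: A ray is a half-line $\rho=\mathbb{R}_{\ge 0}v\subset\mathbb{R}^2$ with $v\in\mathbb{Z}^2\setminus\{0\}$; $u_\rho$ denotes its primitive lattice generator. On $\mathbb{Z}^2$ use the norm $|(x,y)|=\max\{|x|,|y|\}$, and $|\rho|=|u_\rho|$. The completion of a finite set $S$ of rays is the fan with ray set $S$ that is maximal under inclusion among fans with ray set $S$ (its $2$-dimensional cones are spanned by angularly consecutive rays of $S$ at angle less than $\pi$). $T(h,p)$ is the distribution on fans obtained by including each ray $\rho$ with $|\rho|\le h$ independently with probability $p$ and completing. $X(\Sigma)$ is the toric surface of $\Sigma$; it is singular iff some $2$-dimensional cone spanned by rays $\rho,\tau$ has $|\det(u_\rho,u_\tau)|>1$. "With high probability" means with probability tending to $1$ as $h\to\infty$. *)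

theory Defs
  imports "HOL-Probability.Probability"
begin

text \<open>Rays are represented by their primitive generators u = (x,y) in Z^2,
  i.e. gcd x y = 1 (this excludes (0,0)).\<close>

definition primitive :: "int \<times> int \<Rightarrow> bool" where
  "primitive v \<longleftrightarrow> gcd (fst v) (snd v) = 1"

definition lnorm :: "int \<times> int \<Rightarrow> int" where
  "lnorm v = max \<bar>fst v\<bar> \<bar>snd v\<bar>"

definition det2 :: "int \<times> int \<Rightarrow> int \<times> int \<Rightarrow> int" where
  "det2 u w = fst u * snd w - snd u * fst w"

definition rays_upto :: "nat \<Rightarrow> (int \<times> int) set" where
  "rays_upto h = {v. primitive v \<and> lnorm v \<le> int h}"

text \<open>2-dimensional cones of the completion of a ray set S: rays u, w in S
  with w the angularly next ray after u (counterclockwise) and angle from u to w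
  less than pi (det u w > 0), i.e. no ray of S lies strictly inside the cone.\<close>
definition completion_cone :: "(int \<times> int) set \<Rightarrow> int \<times> int \<Rightarrow> int \<times> int \<Rightarrow> bool" where
  "completion_cone S u w \<longleftrightarrow> u \<in> S \<and> w \<in> S \<and> det2 u w > 0 \<and>
     \<not> (\<exists>v\<in>S. det2 u v > 0 \<and> det2 v w > 0)"

text \<open>The toric surface of the completion of S is singular.\<close>
definition singular_completion :: "(int \<times> int) set \<Rightarrow> bool" where
  "singular_completion S \<longleftrightarrow> (\<exists>u w. completion_cone S u w \<and> \<bar>det2 u w\<bar> > 1)"

definition ray_selection :: "nat \<Rightarrow> real \<Rightarrow> (int \<times> int \<Rightarrow> bool) pmf" where
  "ray_selection h p = Pi_pmf (rays_upto h) False (\<lambda>_. bernoulli_pmf p)"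

definition prob_singular :: "nat \<Rightarrow> real \<Rightarrow> real" where
  "prob_singular h p = measure_pmf.prob (ray_selection h p)
     {f. singular_completion {v \<in> rays_upto h. f v}}"

end

theory Submission
  imports Defs
begin

text \<open>Take the rays (t,1) with t close to h. If (t,1) and (t-2,1) are chosen but (t-1,1)
  is not, then no admissible ray lies strictly between them (a lattice point there with
  second coordinate at least 2 would have first coordinate beyond h), so they span a cone
  of the completion of determinant 2. The rays (h - 3i, 1), (h - 3i - 1, 1), (h - 3i - 2, 1)
  for i < h div 6 form disjoint triples, each showing this pattern independently with
  probability p^2(1-p); hence the completion is smooth with probability at most
  (1 - p^2(1-p))^(h div 6), which tends to 0.\<close>

lemma measure_Pi_pmf_insert_bernoulli:
  assumes "finite A" "x \<notin> A" "0 \<le> p" "p \<le> 1"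
  shows "measure_pmf.prob (Pi_pmf (insert x A) d (\<lambda>_. bernoulli_pmf p)) E =
    p * measure_pmf.prob (Pi_pmf A d (\<lambda>_. bernoulli_pmf p)) {f. f(x:=True) \<in> E}
    + (1-p) * measure_pmf.prob (Pi_pmf A d (\<lambda>_. bernoulli_pmf p)) {f. f(x:=False) \<in> E}"
proof -
  let ?P = "Pi_pmf A d (\<lambda>_. bernoulli_pmf p)"
  have "Pi_pmf (insert x A) d (\<lambda>_. bernoulli_pmf p) =
      bind_pmf (bernoulli_pmf p) (\<lambda>y. map_pmf (\<lambda>f. f(x:=y)) ?P)"
    using assms by (subst Pi_pmf_insert') (simp_all add: map_pmf_def)
  then have "emeasure (Pi_pmf (insert x A) d (\<lambda>_. bernoulli_pmf p)) E =
      emeasure (map_pmf (\<lambda>f. f(x:=True)) ?P) E * ennreal p +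
      emeasure (map_pmf (\<lambda>f. f(x:=False)) ?P) E * ennreal (1 - p)"
    using assms by simp
  also have "\<dots> = ennreal (p * measure_pmf.prob ?P {f. f(x:=True) \<in> E}
      + (1-p) * measure_pmf.prob ?P {f. f(x:=False) \<in> E})"
    using assms by (simp add: measure_pmf.emeasure_eq_measure vimage_def ennreal_mult''
        ennreal_plus mult.commute)
  finally show ?thesis
    using assms by (simp add: measure_pmf.emeasure_eq_measure del: ennreal_plus)
qed

lemma measure_Pi_pmf_bernoulli_gap_pattern:
  assumes "finite A" "a \<notin> A" "b \<notin> A" "c \<notin> A" "a \<noteq> b" "a \<noteq> c" "b \<noteq> c"
    and "0 \<le> p" "p \<le> 1"
    and indep: "\<And>f x y. x \<in> {a, b, c} \<Longrightarrow> f(x := y) \<in> E \<longleftrightarrow> f \<in> E"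
  shows "measure_pmf.prob (Pi_pmf (insert a (insert b (insert c A))) d (\<lambda>_. bernoulli_pmf p))
      {f. \<not> (f a \<and> f b \<and> \<not> f c) \<and> f \<in> E} =
    (1 - p*p*(1-p)) * measure_pmf.prob (Pi_pmf A d (\<lambda>_. bernoulli_pmf p)) E"
proof -
  have E_upd: "f(c := y3, b := y2, a := y1) \<in> E \<longleftrightarrow> f \<in> E" for f y1 y2 y3
    using indep by simp
  have pattern: "{h. h(c:=y3) \<in> {g. g(b:=y2) \<in> {f. f(a:=y1) \<in> {f. \<not> (f a \<and> f b \<and> \<not> f c) \<and> f \<in> E}}}}
      = (if y1 \<and> y2 \<and> \<not> y3 then {} else E)" for y1 y2 y3
    using E_upd assms(5-7) by auto
  have fin: "finite (insert c A)" "finite (insert b (insert c A))"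
    and fresh: "b \<notin> insert c A" "a \<notin> insert b (insert c A)"
    using assms(1-7) by auto
  show ?thesis
    by (simp only: measure_Pi_pmf_insert_bernoulli[OF fin(2) fresh(2) assms(8,9)]
        measure_Pi_pmf_insert_bernoulli[OF fin(1) fresh(1) assms(8,9)]
        measure_Pi_pmf_insert_bernoulli[OF assms(1,4,8,9)] pattern)
      (simp add: algebra_simps)
qed

lemma measure_Pi_pmf_bernoulli_no_gap_pattern:
  fixes a b c :: "nat \<Rightarrow> 'a"
  assumes "0 \<le> p" "p \<le> 1" and "finite R" and "\<forall>i<K. {a i, b i, c i} \<subseteq> R"
    and "\<forall>i<K. a i \<noteq> b i \<and> a i \<noteq> c i \<and> b i \<noteq> c i"
    and "\<forall>i<K. \<forall>j<K. i \<noteq> j \<longrightarrow> {a i, b i, c i} \<inter> {a j, b j, c j} = {}"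
  shows "measure_pmf.prob (Pi_pmf R False (\<lambda>_. bernoulli_pmf p))
      {f. \<forall>i<K. \<not> (f (a i) \<and> f (b i) \<and> \<not> f (c i))} = (1 - p*p*(1-p))^K"
  using assms(3-)
proof (induction K arbitrary: R)
  case 0
  then show ?case by simp
next
  case (Suc K)
  define R' where "R' = R - {a K, b K, c K}"
  define E where "E = {f. \<forall>i<K. \<not> (f (a i) \<and> f (b i) \<and> \<not> f (c i))}"
  have R: "R = insert (a K) (insert (b K) (insert (c K) R'))"
    using Suc.prems(2) unfolding R'_def by auto
  have disj: "{a i, b i, c i} \<inter> {a K, b K, c K} = {}" if "i < K" for i
    using Suc.prems(4) that by auto
  have fin: "finite R'" and fresh: "a K \<notin> R'" "b K \<notin> R'" "c K \<notin> R'"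
    using Suc.prems(1) unfolding R'_def by auto
  have distinct: "a K \<noteq> b K" "a K \<noteq> c K" "b K \<noteq> c K"
    using Suc.prems(3) by auto
  have "measure_pmf.prob (Pi_pmf R' False (\<lambda>_. bernoulli_pmf p)) E = (1 - p*p*(1-p))^K"
    unfolding E_def
  proof (rule Suc.IH[OF fin])
    show "\<forall>i<K. {a i, b i, c i} \<subseteq> R'"
    proof (intro allI impI)
      fix i assume "i < K"
      then have "{a i, b i, c i} \<subseteq> R" "{a i, b i, c i} \<inter> {a K, b K, c K} = {}"
        using Suc.prems(2) disj by simp_all
      then show "{a i, b i, c i} \<subseteq> R'" unfolding R'_def by blast
    qed
    show "\<forall>i<K. a i \<noteq> b i \<and> a i \<noteq> c i \<and> b i \<noteq> c i"
      using Suc.prems(3) by simp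
    show "\<forall>i<K. \<forall>j<K. i \<noteq> j \<longrightarrow> {a i, b i, c i} \<inter> {a j, b j, c j} = {}"
      using Suc.prems(4) by (meson less_SucI)
  qed
  moreover have "f(x := y) \<in> E \<longleftrightarrow> f \<in> E" if "x \<in> {a K, b K, c K}" for f x y
  proof -
    have "x \<notin> {a i, b i, c i}" if "i < K" for i
      using disj[OF that] \<open>x \<in> {a K, b K, c K}\<close> by blast
    then show ?thesis unfolding E_def by auto
  qed
  then have "measure_pmf.prob (Pi_pmf R False (\<lambda>_. bernoulli_pmf p))
      {f. \<not> (f (a K) \<and> f (b K) \<and> \<not> f (c K)) \<and> f \<in> E} =
    (1 - p*p*(1-p)) * measure_pmf.prob (Pi_pmf R' False (\<lambda>_. bernoulli_pmf p)) E"
    unfolding R by (rule measure_Pi_pmf_bernoulli_gap_pattern[OF fin fresh distinct assms(1,2)])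
  moreover have "{f. \<forall>i<Suc K. \<not> (f (a i) \<and> f (b i) \<and> \<not> f (c i))} =
      {f. \<not> (f (a K) \<and> f (b K) \<and> \<not> f (c K)) \<and> f \<in> E}"
    unfolding E_def by (auto simp: less_Suc_eq)
  ultimately show ?case by simp
qed

lemma finite_rays_upto: "finite (rays_upto h)"
proof (rule finite_subset)
  show "rays_upto h \<subseteq> {-int h..int h} \<times> {-int h..int h}"
    by (auto simp: rays_upto_def lnorm_def)
qed auto

lemma row_one_in_rays_upto: "1 \<le> s \<Longrightarrow> s \<le> int h \<Longrightarrow> (s, 1) \<in> rays_upto h"
  by (auto simp: rays_upto_def primitive_def lnorm_def)

lemma lattice_point_in_narrow_cone:
  fixes x y t :: int
  assumes "int h \<le> 2*(t-2)" "3 \<le> t" "\<bar>x\<bar> \<le> int h" "det2 (t, 1) (x, y) > 0" "det2 (x, y) (t-2, 1) > 0"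
  shows "x = t - 1 \<and> y = 1"
proof -
  have pos: "t*y - x > 0" "x - y*(t-2) > 0"
    using assms(4,5) by (simp_all add: det2_def algebra_simps)
  have "t*y - y*(t-2) = 2*y" by (simp add: algebra_simps)
  then have "y \<ge> 1" using pos by linarith
  moreover have "\<not> y \<ge> 2"
  proof
    assume "y \<ge> 2"
    then have "y*(t-2) \<ge> 2*(t-2)" using assms(2) by (intro mult_right_mono) auto
    then show False using assms(1,3) pos by linarith
  qed
  ultimately have "y = 1" by simp
  then show ?thesis using pos by simp
qed

lemma singular_completion_of_gap:
  fixes t :: int
  assumes "S \<subseteq> rays_upto h" "int h \<le> 2*(t-2)" "3 \<le> t"
    and "(t, 1) \<in> S" "(t-2, 1) \<in> S" "(t-1, 1) \<notin> S"
  shows "singular_completion S"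
proof -
  have "completion_cone S (t, 1) (t-2, 1)"
    unfolding completion_cone_def
  proof (intro conjI notI)
    assume "\<exists>v\<in>S. det2 (t, 1) v > 0 \<and> det2 v (t-2, 1) > 0"
    then obtain x y where "(x, y) \<in> S" "det2 (t, 1) (x, y) > 0" "det2 (x, y) (t-2, 1) > 0"
      by auto
    moreover from \<open>(x, y) \<in> S\<close> have "\<bar>x\<bar> \<le> int h"
      using assms(1) by (auto simp: rays_upto_def lnorm_def)
    ultimately show False
      using lattice_point_in_narrow_cone[OF assms(2,3)] assms(6) by blast
  qed (use assms in \<open>auto simp: det2_def\<close>)
  moreover have "\<bar>det2 (t, 1) (t-2, 1)\<bar> > 1" by (simp add: det2_def)
  ultimately show ?thesis unfolding singular_completion_def by blast
qed

lemma prob_singular_lower_bound: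
  assumes "0 \<le> p" "p \<le> 1"
  shows "1 - (1 - p*p*(1-p)) ^ (h div 6) \<le> prob_singular h p"
proof -
  define K where "K = h div 6"
  define t where "t i = int h - 3 * int i" for i
  define a where "a i = (t i, 1::int)" for i
  define b where "b i = (t i - 2, 1::int)" for i
  define c where "c i = (t i - 1, 1::int)" for i
  have t: "int h \<le> 2*(t i - 2)" "t i \<le> int h" "3 \<le> t i" if "i < K" for i
    using that unfolding t_def K_def by auto
  let ?M = "ray_selection h p"
  define E where "E = {f. \<forall>i<K. \<not> (f (a i) \<and> f (b i) \<and> \<not> f (c i))}"
  have "measure_pmf.prob ?M E = (1 - p*p*(1-p))^K"
    unfolding ray_selection_def E_def
  proof (rule measure_Pi_pmf_bernoulli_no_gap_pattern)
    show "\<forall>i<K. {a i, b i, c i} \<subseteq> rays_upto h"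
    proof (intro allI impI)
      fix i assume "i < K"
      then show "{a i, b i, c i} \<subseteq> rays_upto h"
        using t[OF \<open>i < K\<close>] by (simp add: a_def b_def c_def row_one_in_rays_upto)
    qed
    show "\<forall>i<K. \<forall>j<K. i \<noteq> j \<longrightarrow> {a i, b i, c i} \<inter> {a j, b j, c j} = {}"
      unfolding a_def b_def c_def t_def by auto
  qed (use assms finite_rays_upto in \<open>auto simp: a_def b_def c_def\<close>)
  moreover have "UNIV - E \<subseteq> {f. singular_completion {v \<in> rays_upto h. f v}}"
  proof
    fix f assume "f \<in> UNIV - E"
    then obtain i where "i < K" "f (a i)" "f (b i)" "\<not> f (c i)" unfolding E_def by auto
    with t[OF \<open>i < K\<close>] show "f \<in> {f. singular_completion {v \<in> rays_upto h. f v}}"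
      by (auto simp: a_def b_def c_def intro!: singular_completion_of_gap row_one_in_rays_upto)
  qed
  then have "measure_pmf.prob ?M (UNIV - E) \<le> prob_singular h p"
    unfolding prob_singular_def by (intro measure_pmf.finite_measure_mono) auto
  ultimately show ?thesis
    using measure_pmf.prob_compl[of E ?M] by (simp add: K_def)
qed

theorem mainTheorem2:
  fixes p :: real
  assumes "0 < p" and "p < 1"
  shows "(\<lambda>h. prob_singular h p) \<longlonglongrightarrow> 1"
proof -
  define r where "r = 1 - p*p*(1-p)"
  have "0 < p*p*(1-p)" "p*p*(1-p) \<le> 1"
    using assms by (simp_all add: mult_le_one)
  then have "norm r < 1" unfolding r_def by simp
  then have "(\<lambda>h. r ^ (h div 6)) \<longlonglongrightarrow> 0"
    by (intro filterlim_compose[OF LIMSEQ_power_zero filterlim_at_top_div_const_nat]) simp_all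
  then have "(\<lambda>h. 1 - r ^ (h div 6)) \<longlonglongrightarrow> 1"
    using tendsto_diff[OF tendsto_const[of 1]] by fastforce
  moreover have "1 - r ^ (h div 6) \<le> prob_singular h p" for h
    using prob_singular_lower_bound assms unfolding r_def by simp
  moreover have "prob_singular h p \<le> 1" for h
    unfolding prob_singular_def by simp
  ultimately show ?thesis
    using tendsto_sandwich[of "\<lambda>h. 1 - r ^ (h div 6)" "\<lambda>h. prob_singular h p" sequentially "\<lambda>_. 1"]
    by simp
qed

end
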